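(* Assume $S\times M\neq\emptyset$, let $(x,\lambda):[t_0,+\infty[\ \to X\times Y$ be a solution of (AHT), and suppose that $\varepsilon$ is twice continuously differentiable and there exists $t_+\ge t_0$ such that $\varepsilon^2(t)+\dot\varepsilon(t)\ge0$ and $2\varepsilon(t)\dot\varepsilon(t)+\ddot\varepsilon(t)\le0$ for all $t\ge t_+$. Then $(x(t),\lambda(t))\to\operatorname{proj}_{S\times M}(0,0)$ strongly in $X\times Y$ as $t\to+\infty$.
   Context: $X,Y$ are real Hilbert spaces; $X\times Y$ carries the product inner product and norm $\|\cdot\|$. Standing assumptions: $f:X\to\mathbb{R}$ is convex and continuously differentiable with $\nabla f$ Lipschitz continuous on bounded subsets of $X$; $A:X\to Y$ is linear and continuous with adjoint $A^*$; $b\in Y$; $\varepsilon:[t_0,+\infty[\ \to\ ]0,+\infty[$ ($t_0\ge0$) satisfies $\lim_{t\to+\infty}\varepsilon(t)=0$. $L(x,\lambda)=f(x)+\langle\lambda,Ax-b\rangle_Y$. $S$ is the set of optimal solutions of $\min\{f(x):Ax=b\}$, $M$ the set of Lagrange multipliers; $S\times M$ is the (closed convex) set of saddle points of $L$, and $\operatorname{proj}_{S\times M}(0,0)$ is its element of least norm. (AHT) is the system $\dot x+\nabla f(x)+A^*\lambda+\varepsilon(t)x=0$, $\dot\lambda+b-Ax+\varepsilon(t)\lambda=0$; a solution is a continuously differentiable $(x,\lambda):[t_0,+\infty[\ \to X\times Y$ satisfying it on $[t_0,+\infty[$ (existence and uniqueness for every initial datum is assumed). *)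

theory Defs
  imports "HOL-Analysis.Analysis"
begin

definition opt_solutions :: "('x \<Rightarrow> real) \<Rightarrow> ('x \<Rightarrow> 'y) \<Rightarrow> 'y \<Rightarrow> 'x set" where
  "opt_solutions f A b = {x. A x = b \<and> (\<forall>z. A z = b \<longrightarrow> f x \<le> f z)}"

definition lagrange_multipliers ::
  "('x::real_vector \<Rightarrow> 'x) \<Rightarrow> ('y \<Rightarrow> 'x) \<Rightarrow> 'x set \<Rightarrow> 'y set" where
  "lagrange_multipliers gradf Aadj S = {l. \<exists>x\<in>S. gradf x + Aadj l = 0}"

definition proj_set :: "'a::real_normed_vector set \<Rightarrow> 'a \<Rightarrow> 'a" where
  "proj_set C a = (THE p. p \<in> C \<and> (\<forall>q\<in>C. dist a p \<le> dist a q))"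

end

(*
  Write z = (x, lambda) and F for the monotone, continuous saddle operator of the Lagrangian, so
  that (AHT) reads z' + F z + eps z = 0 and S x M is the zero set of F.  For every zero q,
  d/dt |z - q|^2 <= -2 eps (|z - q|^2 + <q, z - q>): this bounds the trajectory, and because
  eps^2 + eps' >= 0 gives eps t >= 1/(C + t), which is not integrable, it forces z -> p as soon as
  liminf <p, z t - p> >= 0, where p is the least-norm zero.

  That liminf is obtained without weak compactness.  Since eps^2 + eps' is nonincreasing,
  |eps'| = o(eps); the same relaxation argument applied to the increments z(t + s) - z t then
  gives z' -> 0, hence F (z t) -> 0.  The closed convex sets
  K_n = {u. forall y. <F y, y - u> >= -(|y| + R)/(n + 1)} decrease to the zero set, so their
  least-norm points q_n converge strongly to p; and z t lies in K_n for large t, where the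
  variational inequality of q_n gives <q_n, z t - q_n> >= 0.
*)

theory Submission
  imports Defs
begin

section \<open>Differential inequalities\<close>

lemma le_max_if_deriv_nonpos_where_pos:
  fixes \<phi> \<phi>' :: "real \<Rightarrow> real"
  assumes deriv: "\<And>t. T \<le> t \<Longrightarrow> (\<phi> has_real_derivative \<phi>' t) (at t)"
    and nonpos: "\<And>t. T \<le> t \<Longrightarrow> 0 < \<phi> t \<Longrightarrow> \<phi>' t \<le> 0"
    and "T \<le> t"
  shows "\<phi> t \<le> max (\<phi> T) 0"
proof (rule ccontr)
  let ?M = "max (\<phi> T) 0"
  let ?S = "{T..t} \<inter> \<phi> -` {..?M}"
  assume "\<not> ?thesis"
  then have gt: "?M < \<phi> t" by (simp only: not_le)
  have "continuous_on {T..t} \<phi>"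
    using deriv by (meson DERIV_isCont atLeastAtMost_iff continuous_at_imp_continuous_on)
  then have "closed ?S"
    using continuous_closed_preimage by auto
  moreover have "T \<in> ?S" using \<open>T \<le> t\<close> by auto
  ultimately have uS: "Sup ?S \<in> ?S"
    by (metis closed_contains_Sup bdd_above_Icc bdd_above_Int1 empty_iff)
  define u where "u = Sup ?S"
  have u: "T \<le> u" "u < t" "\<phi> u \<le> ?M"
    using uS gt unfolding u_def by (auto simp: order.order_iff_strict)
  obtain v where v: "u < v" "v < t" "\<phi> t - \<phi> u = (t - u) * \<phi>' v"
    using MVT2[OF \<open>u < t\<close>, of \<phi> \<phi>'] deriv u by auto
  have "v \<notin> ?S"
    using v unfolding u_def by (meson bdd_above_Icc bdd_above_Int1 cSup_upper not_le)
  then have "\<phi>' v \<le> 0" using nonpos[of v] u v by auto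
  then have "\<phi> t \<le> \<phi> u" using v mult_nonneg_nonpos[of "t - u" "\<phi>' v"] by linarith
  with u gt show False by simp
qed

lemma hyperbolic_relaxation_bound:
  fixes \<phi> \<phi>' :: "real \<Rightarrow> real"
  assumes deriv: "\<And>t. T \<le> t \<Longrightarrow> (\<phi> has_real_derivative \<phi>' t) (at t)"
    and relax: "\<And>t. T \<le> t \<Longrightarrow> c < \<phi> t \<Longrightarrow> \<phi>' t \<le> - (\<phi> t - c) / (C + t)"
    and "0 < C + T" and "T \<le> t"
  shows "\<phi> t \<le> c + max (\<phi> T - c) 0 * (C + T) / (C + t)"
proof -
  define \<psi> where "\<psi> t = (C + t) * (\<phi> t - c)" for t
  have "\<psi> t \<le> max (\<psi> T) 0"
  proof (rule le_max_if_deriv_nonpos_where_pos[OF _ _ \<open>T \<le> t\<close>])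
    fix s assume "T \<le> s"
    then show "(\<psi> has_real_derivative (\<phi> s - c) + (C + s) * \<phi>' s) (at s)"
      unfolding \<psi>_def using deriv by (auto intro!: derivative_eq_intros)
    assume "0 < \<psi> s"
    with \<open>0 < C + T\<close> \<open>T \<le> s\<close> have "0 < C + s" "c < \<phi> s"
      by (auto simp: \<psi>_def zero_less_mult_iff)
    with relax[OF \<open>T \<le> s\<close>] show "(\<phi> s - c) + (C + s) * \<phi>' s \<le> 0"
      by (simp add: le_divide_eq algebra_simps)
  qed
  also have "\<dots> \<le> max (\<phi> T - c) 0 * (C + T)"
    unfolding \<psi>_def using \<open>0 < C + T\<close> by (auto simp: max_def)
  finally show ?thesis
    using \<open>0 < C + T\<close> \<open>T \<le> t\<close> by (simp add: \<psi>_def field_simps)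
qed

lemma norm_deriv_le_if_increments_le:
  fixes z :: "real \<Rightarrow> 'a::real_normed_vector"
  assumes deriv: "(z has_vector_derivative v) (at t)"
    and incr: "\<And>s. 0 < s \<Longrightarrow> s \<le> 1 \<Longrightarrow> norm (z (t + s) - z t) \<le> s * \<beta>"
  shows "norm v \<le> \<beta>"
proof (rule field_le_epsilon)
  fix e :: real assume "0 < e"
  obtain d where "0 < d"
    and d: "\<And>y. norm (y - t) < d \<Longrightarrow> norm (z y - z t - (y - t) *\<^sub>R v) \<le> e * norm (y - t)"
    using deriv \<open>0 < e\<close> unfolding has_vector_derivative_def has_derivative_at_alt by blast
  define s where "s = min (d / 2) 1"
  have "0 < s" "s \<le> 1" "s < d" using \<open>0 < d\<close> unfolding s_def by auto
  have "norm (s *\<^sub>R v) \<le> norm (z (t + s) - z t) + norm (z (t + s) - z t - s *\<^sub>R v)"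
    by (metis add_diff_cancel_left' diff_add_cancel norm_triangle_ineq4)
  also have "\<dots> \<le> s * \<beta> + e * s"
    using incr[OF \<open>0 < s\<close> \<open>s \<le> 1\<close>] d[of "t + s"] \<open>0 < s\<close> \<open>s < d\<close> by simp
  finally have "s * norm v \<le> s * (\<beta> + e)" using \<open>0 < s\<close> by (simp add: algebra_simps)
  then show "norm v \<le> \<beta> + e" using \<open>0 < s\<close> by simp
qed

lemma has_vector_derivative_shift:
  fixes z :: "real \<Rightarrow> 'a::real_normed_vector"
  assumes "(z has_vector_derivative v) (at (t + s))"
  shows "((\<lambda>t. z (t + s)) has_vector_derivative v) (at t)"
proof -
  have "((\<lambda>t. t + s) has_vector_derivative 1) (at t)"
    by (auto intro!: derivative_eq_intros simp flip: has_real_derivative_iff_has_vector_derivative)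
  from vector_diff_chain_at[OF this] assms show ?thesis by (simp add: o_def)
qed

lemma has_real_derivative_norm_sq:
  fixes f :: "real \<Rightarrow> 'a::real_inner"
  assumes "(f has_vector_derivative f') (at t)"
  shows "((\<lambda>t. (norm (f t))\<^sup>2) has_real_derivative 2 * inner f' (f t)) (at t)"
proof -
  note d = assms[unfolded has_vector_derivative_def]
  have "((\<lambda>t. inner (f t) (f t)) has_derivative
      (\<lambda>h. inner (f t) (h *\<^sub>R f') + inner (h *\<^sub>R f') (f t))) (at t)"
    using has_derivative_inner[OF d d] .
  then show ?thesis
    unfolding has_field_derivative_def power2_norm_eq_inner
    by (rule has_derivative_eq_rhs) (auto simp: fun_eq_iff inner_commute)
qed

lemma lipschitz_on_if_continuous_derivative:
  fixes z :: "real \<Rightarrow> 'a::real_normed_vector"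
  assumes "\<And>t. t \<in> {a..b} \<Longrightarrow> (z has_vector_derivative z' t) (at t)"
    and "continuous_on {a..b} z'"
  obtains B where "B-lipschitz_on {a..b} z"
proof -
  have "bounded (z' ` {a..b})"
    using assms(2) by (intro compact_imp_bounded compact_continuous_image) auto
  then obtain B where "0 < B" "\<And>t. t \<in> {a..b} \<Longrightarrow> norm (z' t) \<le> B"
    unfolding bounded_pos by blast
  then have "B-lipschitz_on {a..b} z"
    using assms(1)
    by (intro bounded_derivative_imp_lipschitz[where f' = "\<lambda>t h. h *\<^sub>R z' t"])
      (auto simp: has_vector_derivative_def onorm_scaleR_left[OF bounded_linear_ident] onorm_id
        intro: has_derivative_at_withinI)
  then show thesis by (rule that)
qed

section \<open>Nearest points in Hilbert spaces\<close>

lemma Cauchy_if_dist_sq_le: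
  fixes u :: "nat \<Rightarrow> 'a::metric_space"
  assumes "\<And>m n. n \<le> m \<Longrightarrow> (dist (u m) (u n))\<^sup>2 \<le> e n" and "e \<longlonglongrightarrow> 0"
  shows "Cauchy u"
  unfolding Cauchy_altdef2
proof (intro allI impI)
  fix r :: real assume "0 < r"
  then obtain N where "e N < r\<^sup>2"
    using \<open>e \<longlonglongrightarrow> 0\<close> by (metis eventually_happens' order_tendstoD(2) sequentially_bot zero_less_power)
  with assms(1) have "(dist (u n) (u N))\<^sup>2 < r\<^sup>2" if "N \<le> n" for n
    using that by (meson le_less_trans)
  with \<open>0 < r\<close> show "\<exists>N. \<forall>n\<ge>N. dist (u n) (u N) < r"
    by (meson power_less_imp_less_base less_imp_le)
qed

lemma dist_sq_le_if_convex_min_dist: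
  fixes C :: "'a::real_inner set"
  assumes "convex C" "u \<in> C" "v \<in> C" "\<And>w. w \<in> C \<Longrightarrow> d \<le> dist a w" "0 \<le> d"
  shows "(dist u v)\<^sup>2 \<le> 2 * (dist a u)\<^sup>2 + 2 * (dist a v)\<^sup>2 - 4 * d\<^sup>2"
proof -
  have "midpoint u v \<in> C"
    using convexD[OF assms(1-3), of "1/2" "1/2"] by (simp add: midpoint_def scaleR_add_right)
  moreover have "(u - a) + (v - a) = 2 *\<^sub>R (midpoint u v - a)"
    by (simp add: midpoint_def algebra_simps scaleR_2)
  ultimately have "2 * d \<le> norm ((u - a) + (v - a))"
    using assms(4)[of "midpoint u v"] by (simp add: dist_norm norm_minus_commute)
  then have "(2 * d)\<^sup>2 \<le> (norm ((u - a) + (v - a)))\<^sup>2"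
    using \<open>0 \<le> d\<close> by (intro power_mono) auto
  moreover have "(norm ((u - a) - (v - a)))\<^sup>2 + (norm ((u - a) + (v - a)))\<^sup>2
      = 2 * (norm (u - a))\<^sup>2 + 2 * (norm (v - a))\<^sup>2"
    by (simp add: power2_norm_eq_inner inner_add inner_diff inner_commute)
  ultimately show ?thesis by (simp add: dist_norm norm_minus_commute power_mult_distrib)
qed

lemma closed_convex_nearest_point_exists:
  fixes C :: "'a::{real_inner,complete_space} set"
  assumes "closed C" "convex C" "C \<noteq> {}"
  shows "\<exists>p\<in>C. \<forall>q\<in>C. dist a p \<le> dist a q"
proof -
  define d where "d = infdist a C"
  have "\<exists>c\<in>C. dist a c < d + inverse (Suc n)" for n
    using cInf_lessD[of "dist a ` C" "d + inverse (Suc n)"] \<open>C \<noteq> {}\<close>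
    by (auto simp: d_def infdist_notempty)
  then obtain c where c: "\<And>n. c n \<in> C" "\<And>n. dist a (c n) < d + inverse (Suc n)"
    by metis
  have d_le: "d \<le> dist a q" if "q \<in> C" for q
    using that by (simp add: d_def infdist_le)
  have "0 \<le> d" by (simp add: d_def infdist_nonneg)
  have lim: "(\<lambda>n. d + inverse (Suc n)) \<longlonglongrightarrow> d"
    using tendsto_add[OF tendsto_const LIMSEQ_inverse_real_of_nat, of d] by simp
  have "Cauchy c"
  proof (rule Cauchy_if_dist_sq_le)
    fix m n :: nat assume "n \<le> m"
    have "(dist (c m) (c n))\<^sup>2 \<le> 2 * (dist a (c m))\<^sup>2 + 2 * (dist a (c n))\<^sup>2 - 4 * d\<^sup>2"
      by (intro dist_sq_le_if_convex_min_dist[OF \<open>convex C\<close> c(1) c(1)] d_le \<open>0 \<le> d\<close>)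
    also have "\<dots> \<le> 4 * ((d + inverse (Suc n))\<^sup>2 - d\<^sup>2)"
    proof -
      have "inverse (Suc m) \<le> inverse (Suc n)"
        using \<open>n \<le> m\<close> by (intro le_imp_inverse_le) simp_all
      then have "dist a (c m) \<le> d + inverse (Suc n)"
        using c(2)[of m] by linarith
      then have "(dist a (c m))\<^sup>2 \<le> (d + inverse (Suc n))\<^sup>2" by (simp add: power_mono)
      moreover have "(dist a (c n))\<^sup>2 \<le> (d + inverse (Suc n))\<^sup>2"
        using c(2)[of n] by (simp add: power_mono)
      ultimately show ?thesis by simp
    qed
    finally show "(dist (c m) (c n))\<^sup>2 \<le> 4 * ((d + inverse (Suc n))\<^sup>2 - d\<^sup>2)" .
  next
    have "(\<lambda>n. 4 * ((d + inverse (Suc n))\<^sup>2 - d\<^sup>2)) \<longlonglongrightarrow> 4 * (d\<^sup>2 - d\<^sup>2)"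
      by (intro tendsto_mult tendsto_diff tendsto_power lim tendsto_const)
    then show "(\<lambda>n. 4 * ((d + inverse (Suc n))\<^sup>2 - d\<^sup>2)) \<longlonglongrightarrow> 0" by simp
  qed
  then obtain p where p: "c \<longlonglongrightarrow> p"
    by (auto simp: Cauchy_convergent_iff convergent_def)
  have "p \<in> C" using closed_sequentially[OF \<open>closed C\<close> c(1) p] .
  moreover have "dist a p \<le> d"
  proof (rule tendsto_le[OF trivial_limit_sequentially])
    show "(\<lambda>n. d + inverse (Suc n)) \<longlonglongrightarrow> d" by (rule lim)
    show "(\<lambda>n. dist a (c n)) \<longlonglongrightarrow> dist a p" by (intro tendsto_intros p)
    show "\<forall>\<^sub>F n in sequentially. dist a (c n) \<le> d + inverse (Suc n)"
      using c(2) by (simp add: less_imp_le)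
  qed
  ultimately show ?thesis using d_le by (meson order_trans)
qed

lemma proj_set_eqI:
  fixes C :: "'a::real_inner set"
  assumes "closed C" "convex C" "p \<in> C" "\<And>q. q \<in> C \<Longrightarrow> dist a p \<le> dist a q"
  shows "proj_set C a = p"
  unfolding proj_set_def
  using assms any_closest_point_unique[OF assms(2,1)] by (intro the_equality) auto

lemma
  fixes C :: "'a::{real_inner,complete_space} set"
  assumes "closed C" "convex C" "C \<noteq> {}"
  shows proj_set_mem: "proj_set C a \<in> C"
    and proj_set_dist_le: "q \<in> C \<Longrightarrow> dist a (proj_set C a) \<le> dist a q"
  using closed_convex_nearest_point_exists[OF assms, of a] proj_set_eqI[OF assms(1,2)] by auto

lemma proj_set_decseq_tendsto:
  fixes K :: "nat \<Rightarrow> 'a::{real_inner,complete_space} set"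
  assumes closed: "\<And>n. closed (K n)" and convex: "\<And>n. convex (K n)"
    and "decseq K" and "(\<Inter>n. K n) \<noteq> {}"
  shows "(\<lambda>n. proj_set (K n) a) \<longlonglongrightarrow> proj_set (\<Inter>n. K n) a"
proof -
  define P where "P n = proj_set (K n) a" for n
  obtain p where p: "\<And>n. p \<in> K n" using \<open>(\<Inter>n. K n) \<noteq> {}\<close> by blast
  have P_mem: "P m \<in> K n" if "n \<le> m" for m n
    using proj_set_mem[OF closed convex, of m] p \<open>decseq K\<close> that
    unfolding P_def decseq_def by blast
  have P_le: "dist a (P n) \<le> dist a q" if "q \<in> K n" for n q
    using proj_set_dist_le[OF closed convex _ that] that unfolding P_def by blast
  define \<delta> where "\<delta> n = (dist a (P n))\<^sup>2" for n
  have "incseq \<delta>"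
    unfolding incseq_def \<delta>_def using P_le P_mem by (simp add: power_mono)
  moreover have "\<delta> n \<le> (dist a p)\<^sup>2" for n
    unfolding \<delta>_def using P_le[OF p] by (simp add: power_mono)
  ultimately obtain L where L: "\<delta> \<longlonglongrightarrow> L" "\<And>n. \<delta> n \<le> L"
    using incseq_convergent by metis
  have "Cauchy P"
  proof (rule Cauchy_if_dist_sq_le)
    fix m n :: nat assume "n \<le> m"
    have "(dist (P m) (P n))\<^sup>2 \<le> 2 * \<delta> m + 2 * \<delta> n - 4 * \<delta> n"
      unfolding \<delta>_def
      by (rule dist_sq_le_if_convex_min_dist[OF convex P_mem[OF \<open>n \<le> m\<close>] P_mem P_le]) auto
    then show "(dist (P m) (P n))\<^sup>2 \<le> 2 * (L - \<delta> n)" using L(2)[of m] by simp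
  next
    show "(\<lambda>n. 2 * (L - \<delta> n)) \<longlonglongrightarrow> 0"
      using L(1) by (auto intro!: tendsto_eq_intros)
  qed
  then obtain m where m: "P \<longlonglongrightarrow> m"
    by (auto simp: Cauchy_convergent_iff convergent_def)
  have "m \<in> K n" for n
  proof (rule Lim_in_closed_set[OF closed _ trivial_limit_sequentially m])
    show "\<forall>\<^sub>F k in sequentially. P k \<in> K n"
      using eventually_ge_at_top[of n] by (rule eventually_mono) (rule P_mem)
  qed
  moreover have "dist a m \<le> dist a q" if "q \<in> (\<Inter>n. K n)" for q
    using that P_le by (intro tendsto_le[OF _ tendsto_const tendsto_dist[OF tendsto_const m]]) auto
  ultimately have "proj_set (\<Inter>n. K n) a = m"
    using closed convex by (intro proj_set_eqI closed_INT convex_INT) auto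
  with m show ?thesis unfolding P_def by simp
qed

lemma inner_diff_self_diff_le:
  fixes p q w :: "'a::real_inner"
  shows "\<bar>inner p (w - p) - inner q (w - q)\<bar> \<le> norm (p - q) * (norm w + norm p + norm q)"
proof -
  have "inner p (w - p) - inner q (w - q) = inner (p - q) (w - p - q)"
    by (simp add: inner_add inner_diff inner_commute)
  also have "\<bar>\<dots>\<bar> \<le> norm (p - q) * norm (w - p - q)" by (rule Cauchy_Schwarz_ineq2)
  also have "\<dots> \<le> norm (p - q) * (norm w + norm p + norm q)"
    using norm_triangle_ineq4[of "w - p" q] norm_triangle_ineq4[of w p] by (intro mult_left_mono) auto
  finally show ?thesis .
qed

section \<open>Monotone operators\<close>

lemma closed_minty_set: "closed {u. \<forall>y. g y \<le> inner (F y) (y - u)}"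
  by (intro closed_Collect_all closed_Collect_le continuous_intros)

lemma convex_minty_set: "convex {u. \<forall>y. g y \<le> inner (F y) (y - u)}"
proof -
  have "g y \<le> inner (F y) (y - u) \<longleftrightarrow> inner (F y) u \<le> inner (F y) y - g y" for y u
    by (auto simp: inner_diff_right)
  then have "{u. \<forall>y. g y \<le> inner (F y) (y - u)} = (\<Inter>y. {u. inner (F y) u \<le> inner (F y) y - g y})"
    by blast
  then show ?thesis by (simp add: convex_INT convex_halfspace_le)
qed

lemma minty_zero:
  fixes F :: "'a::real_inner \<Rightarrow> 'a"
  assumes cont: "\<And>u. isCont F u" and minty: "\<And>y. 0 \<le> inner (F y) (y - m)"
  shows "F m = 0"
proof -
  have "((\<lambda>s. inner (F (m - s *\<^sub>R F m)) (F m)) \<longlongrightarrow> inner (F m) (F m)) (at_right 0)"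
    by (intro tendsto_intros isCont_tendsto_compose[OF cont]) (auto intro!: tendsto_eq_intros)
  moreover have "\<forall>\<^sub>F s in at_right 0. inner (F (m - s *\<^sub>R F m)) (F m) \<le> 0"
    using eventually_at_right_less[of "0::real"]
  proof eventually_elim
    case (elim s)
    then show ?case using minty[of "m - s *\<^sub>R F m"] by (simp add: inner_add inner_diff mult_le_0_iff)
  qed
  ultimately have "inner (F m) (F m) \<le> 0"
    by (rule tendsto_upperbound) simp
  then show ?thesis by (metis antisym inner_eq_zero_iff inner_ge_zero)
qed

lemma monotone_zero_iff_minty:
  fixes F :: "'a::real_inner \<Rightarrow> 'a"
  assumes mono: "\<And>u v. 0 \<le> inner (F u - F v) (u - v)" and cont: "\<And>u. isCont F u"
  shows "F u = 0 \<longleftrightarrow> (\<forall>y. 0 \<le> inner (F y) (y - u))"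
  using mono[of _ u] minty_zero[OF cont, of u] by (metis diff_zero)

lemma
  fixes F :: "'a::real_inner \<Rightarrow> 'a"
  assumes "\<And>u v. 0 \<le> inner (F u - F v) (u - v)" and "\<And>u. isCont F u"
  shows closed_monotone_zeros: "closed {u. F u = 0}"
    and convex_monotone_zeros: "convex {u. F u = 0}"
proof -
  have "{u. F u = 0} = {u. \<forall>y. 0 \<le> inner (F y) (y - u)}"
    using monotone_zero_iff_minty[OF assms] by blast
  then show "closed {u. F u = 0}" "convex {u. F u = 0}"
    using closed_minty_set[of "\<lambda>_. 0" F] convex_minty_set[of "\<lambda>_. 0" F] by simp_all
qed

text \<open>The set \<open>K\<^sub>n\<close> of the proof sketch is \<open>minty_relaxation F R (1 / (n + 1))\<close>.\<close>

definition minty_relaxation :: "('a::real_inner \<Rightarrow> 'a) \<Rightarrow> real \<Rightarrow> real \<Rightarrow> 'a set" where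
  "minty_relaxation F R r = {u. \<forall>y. - r * (norm y + R) \<le> inner (F y) (y - u)}"

lemma closed_minty_relaxation: "closed (minty_relaxation F R r)"
  unfolding minty_relaxation_def by (rule closed_minty_set)

lemma convex_minty_relaxation: "convex (minty_relaxation F R r)"
  unfolding minty_relaxation_def by (rule convex_minty_set)

lemma minty_relaxation_mono:
  fixes F :: "'a::real_inner \<Rightarrow> 'a"
  assumes "0 \<le> R" "r \<le> r'"
  shows "minty_relaxation F R r \<subseteq> minty_relaxation F R r'"
  unfolding minty_relaxation_def
proof (intro Collect_mono allI impI)
  fix u y :: 'a assume "\<forall>y. - r * (norm y + R) \<le> inner (F y) (y - u)"
  moreover have "- r' * (norm y + R) \<le> - r * (norm y + R)"
    using assms by (simp add: mult_right_mono)
  ultimately show "- r' * (norm y + R) \<le> inner (F y) (y - u)" by (meson order_trans)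
qed

lemma mem_minty_relaxation:
  fixes F :: "'a::real_inner \<Rightarrow> 'a"
  assumes mono: "\<And>u v. 0 \<le> inner (F u - F v) (u - v)"
    and "norm u \<le> R" "norm (F u) \<le> r"
  shows "u \<in> minty_relaxation F R r"
  unfolding minty_relaxation_def
proof (intro CollectI allI)
  fix y
  have "norm (y - u) \<le> norm y + R"
    using norm_triangle_ineq4[of y u] assms(2) by linarith
  then have "norm (F u) * norm (y - u) \<le> r * (norm y + R)"
    using assms(3) order_trans[OF norm_ge_zero assms(3)] by (intro mult_mono) auto
  then have "- r * (norm y + R) \<le> - (norm (F u) * norm (y - u))" by simp
  also have "\<dots> \<le> inner (F u) (y - u)"
    using Cauchy_Schwarz_ineq2[of "F u" "y - u"] by linarith
  also have "\<dots> \<le> inner (F y) (y - u)"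
    using mono[of y u] by (simp add: inner_diff_left)
  finally show "- r * (norm y + R) \<le> inner (F y) (y - u)" .
qed

lemma Inter_minty_relaxation:
  fixes F :: "'a::real_inner \<Rightarrow> 'a"
  assumes mono: "\<And>u v. 0 \<le> inner (F u - F v) (u - v)" and cont: "\<And>u. isCont F u"
    and "0 \<le> R"
  shows "(\<Inter>n. minty_relaxation F R (inverse (Suc n))) = {u. F u = 0}"
proof (intro set_eqI iffI)
  fix u assume u: "u \<in> (\<Inter>n. minty_relaxation F R (inverse (Suc n)))"
  have "0 \<le> inner (F y) (y - u)" for y
  proof (rule tendsto_le[OF trivial_limit_sequentially tendsto_const])
    have "(\<lambda>n. - inverse (Suc n)) \<longlonglongrightarrow> (0::real)"
      using tendsto_minus[OF LIMSEQ_inverse_real_of_nat] by simp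
    then show "(\<lambda>n. - inverse (Suc n) * (norm y + R)) \<longlonglongrightarrow> 0"
      by (rule tendsto_mult_left_zero)
    show "\<forall>\<^sub>F n in sequentially. - inverse (Suc n) * (norm y + R) \<le> inner (F y) (y - u)"
      using u by (simp add: minty_relaxation_def)
  qed
  then show "u \<in> {u. F u = 0}" using monotone_zero_iff_minty[OF mono cont] by simp
next
  fix u assume "u \<in> {u. F u = 0}"
  then have "0 \<le> inner (F y) (y - u)" for y
    using monotone_zero_iff_minty[OF mono cont] by simp
  moreover have "- inverse (Suc n) * (norm y + R) \<le> 0" for n and y :: 'a
    using \<open>0 \<le> R\<close> by simp
  ultimately show "u \<in> (\<Inter>n. minty_relaxation F R (inverse (Suc n)))"
    unfolding minty_relaxation_def by (blast intro: order_trans)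
qed

lemma proj_set_minty_relaxation_tendsto:
  fixes F :: "'a::{real_inner,complete_space} \<Rightarrow> 'a"
  assumes mono: "\<And>u v. 0 \<le> inner (F u - F v) (u - v)" and cont: "\<And>u. isCont F u"
    and "0 \<le> R" and "{u. F u = 0} \<noteq> {}"
  shows "(\<lambda>n. proj_set (minty_relaxation F R (inverse (Suc n))) a) \<longlonglongrightarrow> proj_set {u. F u = 0} a"
proof -
  have "decseq (\<lambda>n. minty_relaxation F R (inverse (Suc n)))"
  proof (rule decseq_SucI)
    fix n
    have "inverse (Suc (Suc n)) \<le> inverse (Suc n)" by (rule le_imp_inverse_le) simp_all
    then show "minty_relaxation F R (inverse (Suc (Suc n))) \<subseteq> minty_relaxation F R (inverse (Suc n))"
      using \<open>0 \<le> R\<close> by (rule minty_relaxation_mono[rotated])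
  qed
  then have "(\<lambda>n. proj_set (minty_relaxation F R (inverse (Suc n))) a)
      \<longlonglongrightarrow> proj_set (\<Inter>n. minty_relaxation F R (inverse (Suc n))) a"
    using \<open>{u. F u = 0} \<noteq> {}\<close> Inter_minty_relaxation[OF mono cont \<open>0 \<le> R\<close>]
    by (intro proj_set_decseq_tendsto closed_minty_relaxation convex_minty_relaxation) simp_all
  then show ?thesis unfolding Inter_minty_relaxation[OF mono cont \<open>0 \<le> R\<close>] .
qed

section \<open>The regularisation parameter\<close>

text \<open>The last two assumptions say that \<open>(1 / eps)' \<le> 1\<close> and that \<open>eps\<^sup>2 + eps'\<close> is nonincreasing.\<close>

locale tikhonov_parameter =
  fixes eps eps' eps'' :: "real \<Rightarrow> real" and T :: real
  assumes eps_deriv: "\<And>t. T \<le> t \<Longrightarrow> (eps has_real_derivative eps' t) (at t)"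
    and eps'_deriv: "\<And>t. T \<le> t \<Longrightarrow> (eps' has_real_derivative eps'' t) (at t)"
    and eps_pos: "\<And>t. T \<le> t \<Longrightarrow> 0 < eps t"
    and eps_tendsto: "(eps \<longlongrightarrow> 0) at_top"
    and eps_sq_add_deriv_nonneg: "\<And>t. T \<le> t \<Longrightarrow> 0 \<le> (eps t)\<^sup>2 + eps' t"
    and eps_sq_add_deriv_deriv_nonpos: "\<And>t. T \<le> t \<Longrightarrow> 2 * eps t * eps' t + eps'' t \<le> 0"
begin

lemma inverse_eps_diff_le:
  assumes "T \<le> s" "s \<le> t"
  shows "1 / eps t - 1 / eps s \<le> t - s"
proof -
  have "(\<lambda>t. 1 / eps t - t) t \<le> (\<lambda>t. 1 / eps t - t) s"
  proof (rule DERIV_nonpos_imp_nonincreasing[OF \<open>s \<le> t\<close>])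
    fix x assume "s \<le> x" "x \<le> t"
    with \<open>T \<le> s\<close> have "T \<le> x" by simp
    then have "((\<lambda>t. 1 / eps t - t) has_real_derivative (- eps' x / (eps x)\<^sup>2 - 1)) (at x)"
      using eps_deriv[OF \<open>T \<le> x\<close>] eps_pos[OF \<open>T \<le> x\<close>]
      by (auto intro!: derivative_eq_intros simp: power2_eq_square field_simps)
    moreover have "- eps' x / (eps x)\<^sup>2 - 1 \<le> 0"
      using eps_sq_add_deriv_nonneg[OF \<open>T \<le> x\<close>] eps_pos[OF \<open>T \<le> x\<close>]
      by (simp add: field_simps)
    ultimately show "\<exists>y. ((\<lambda>t. 1 / eps t - t) has_real_derivative y) (at x) \<and> y \<le> 0"
      by blast
  qed
  then show ?thesis by simp
qed

lemma eps_ge_hyperbola: "\<exists>C. \<forall>t\<ge>T. 0 < C + t \<and> 1 / (C + t) \<le> eps t"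
proof (intro exI allI impI)
  fix t assume "T \<le> t"
  then have le: "1 / eps t \<le> (1 / eps T - T) + t"
    using inverse_eps_diff_le[OF order_refl] by force
  moreover have "0 < 1 / eps t" using eps_pos[OF \<open>T \<le> t\<close>] by simp
  ultimately have "0 < (1 / eps T - T) + t" by linarith
  moreover have "inverse ((1 / eps T - T) + t) \<le> inverse (1 / eps t)"
    using le \<open>0 < 1 / eps t\<close> by (rule le_imp_inverse_le)
  ultimately show "0 < (1 / eps T - T) + t \<and> 1 / ((1 / eps T - T) + t) \<le> eps t"
    by (simp add: inverse_eq_divide)
qed

lemma eps_le_twice:
  assumes "T \<le> s" "s \<le> t" "t - s \<le> 1 / (2 * eps t)"
  shows "eps s \<le> 2 * eps t"
proof -
  have "1 / eps t - 1 / eps s \<le> 1 / (2 * eps t)"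
    using inverse_eps_diff_le[OF assms(1,2)] assms(3) by linarith
  then have "1 / (2 * eps t) \<le> 1 / eps s"
    by (simp add: field_simps)
  then show ?thesis
    using eps_pos assms by (simp add: field_simps)
qed

lemma eps_sq_add_deriv_antimono:
  assumes "T \<le> s" "s \<le> t"
  shows "(eps t)\<^sup>2 + eps' t \<le> (eps s)\<^sup>2 + eps' s"
proof (rule DERIV_nonpos_imp_nonincreasing[where f = "\<lambda>t. (eps t)\<^sup>2 + eps' t", OF \<open>s \<le> t\<close>])
  fix x assume "s \<le> x" "x \<le> t"
  with \<open>T \<le> s\<close> have "T \<le> x" by simp
  then have "((\<lambda>t. (eps t)\<^sup>2 + eps' t) has_real_derivative 2 * eps x * eps' x + eps'' x) (at x)"
    using eps_deriv eps'_deriv by (auto intro!: derivative_eq_intros)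
  then show "\<exists>y. ((\<lambda>t. (eps t)\<^sup>2 + eps' t) has_real_derivative y) (at x) \<and> y \<le> 0"
    using eps_sq_add_deriv_deriv_nonpos[OF \<open>T \<le> x\<close>] by blast
qed

lemma eps_sq_add_deriv_less:
  assumes "0 < k" "T + 2 / k \<le> t" "eps t \<le> k / 8"
  shows "(eps t)\<^sup>2 + eps' t < k * eps t"
proof (rule ccontr)
  assume "\<not> ?thesis"
  then have large: "k * eps t \<le> (eps t)\<^sup>2 + eps' t" by simp
  define t1 where "t1 = t - 2 / k"
  have "T \<le> t1" "t1 < t" using assms unfolding t1_def by auto
  obtain \<xi> where \<xi>: "t1 < \<xi>" "\<xi> < t" "eps t - eps t1 = (t - t1) * eps' \<xi>"
    using MVT2[OF \<open>t1 < t\<close>, of eps eps'] eps_deriv \<open>T \<le> t1\<close> by auto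
  have "T \<le> \<xi>" "0 < eps t" using \<open>T \<le> t1\<close> \<xi> eps_pos[of t] by auto
  have "t - \<xi> \<le> 2 / k" using \<xi>(1) unfolding t1_def by simp
  also have "\<dots> \<le> 1 / (2 * eps t)"
    using assms \<open>0 < eps t\<close> by (simp add: field_simps)
  finally have "t - \<xi> \<le> 1 / (2 * eps t)" .
  then have "eps \<xi> \<le> 2 * eps t"
    using eps_le_twice \<open>T \<le> \<xi>\<close> \<xi>(2) by simp
  then have "(eps \<xi>)\<^sup>2 \<le> 4 * (eps t)\<^sup>2"
    using eps_pos[OF \<open>T \<le> \<xi>\<close>] power_mono[of "eps \<xi>" "2 * eps t" 2] by simp
  moreover have "(eps t)\<^sup>2 + eps' t \<le> (eps \<xi>)\<^sup>2 + eps' \<xi>"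
    using eps_sq_add_deriv_antimono \<open>T \<le> \<xi>\<close> \<xi>(2) by simp
  moreover have "4 * (eps t)\<^sup>2 \<le> k * eps t / 2"
    using assms(3) \<open>0 < eps t\<close> by (simp add: power2_eq_square)
  ultimately have "k * eps t / 2 \<le> eps' \<xi>" using large by linarith
  then have "eps t \<le> (t - t1) * eps' \<xi>"
    using \<open>0 < k\<close> unfolding t1_def by (simp add: field_simps)
  with \<xi>(3) eps_pos[OF \<open>T \<le> t1\<close>] show False by simp
qed

lemma eventually_abs_deriv_le:
  assumes "0 < k"
  shows "\<forall>\<^sub>F t in at_top. \<bar>eps' t\<bar> \<le> k * eps t"
proof -
  have "\<forall>\<^sub>F t in at_top. eps t \<le> k / 8"
    using order_tendstoD(2)[OF eps_tendsto, of "k / 8"] \<open>0 < k\<close> by (auto elim: eventually_mono)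
  then show ?thesis
    using eventually_ge_at_top[of "T + 2 / k"]
  proof eventually_elim
    case (elim t)
    moreover have "0 < 2 / k" using \<open>0 < k\<close> by simp
    ultimately have "T \<le> t" by linarith
    have "eps' t < k * eps t"
      using eps_sq_add_deriv_less[OF \<open>0 < k\<close> elim(2,1)] zero_le_power2[of "eps t"] by linarith
    moreover have "eps t * eps t \<le> k * eps t"
      using elim(1) eps_pos[OF \<open>T \<le> t\<close>] \<open>0 < k\<close> by (intro mult_right_mono) auto
    then have "- eps' t \<le> k * eps t"
      using eps_sq_add_deriv_nonneg[OF \<open>T \<le> t\<close>] by (simp add: power2_eq_square)
    ultimately show ?case by linarith
  qed
qed

lemma eventually_eps_increment_le:
  assumes "0 < k"
  shows "\<forall>\<^sub>F t in at_top. \<forall>s. 0 < s \<longrightarrow> s \<le> 1 \<longrightarrow>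
    \<bar>eps (t + s) - eps t\<bar> \<le> k * s * eps (t + s)"
proof -
  have "\<forall>\<^sub>F t in at_top. \<bar>eps' t\<bar> \<le> k / 2 * eps t"
    using \<open>0 < k\<close> by (intro eventually_abs_deriv_le) simp
  moreover have "\<forall>\<^sub>F t in at_top. eps t < 1 / 2"
    using order_tendstoD(2)[OF eps_tendsto, of "1 / 2"] by simp
  moreover have "\<forall>\<^sub>F t in at_top. T \<le> t" by (rule eventually_ge_at_top)
  ultimately have "\<forall>\<^sub>F t in at_top. \<bar>eps' t\<bar> \<le> k / 2 * eps t \<and> eps t \<le> 1 / 2 \<and> T \<le> t"
    by eventually_elim simp
  then obtain T' where T': "\<And>t. T' \<le> t \<Longrightarrow> \<bar>eps' t\<bar> \<le> k / 2 * eps t \<and> eps t \<le> 1 / 2 \<and> T \<le> t"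
    by (auto simp: eventually_at_top_linorder)
  have "\<bar>eps (t + s) - eps t\<bar> \<le> k * s * eps (t + s)" if "T' \<le> t" "0 < s" "s \<le> 1" for t s
  proof -
    have "T \<le> x" if "t \<le> x" for x using T' \<open>T' \<le> t\<close> that by force
    then obtain \<xi> where \<xi>: "t < \<xi>" "\<xi> < t + s" "eps (t + s) - eps t = (t + s - t) * eps' \<xi>"
      using MVT2[of t "t + s" eps eps'] eps_deriv \<open>0 < s\<close> by auto
    have "T' \<le> \<xi>" "T' \<le> t + s" using \<xi> that by auto
    have "1 \<le> 1 / (2 * eps (t + s))"
      using T'[OF \<open>T' \<le> t + s\<close>] eps_pos[of "t + s"] by (simp add: field_simps)
    then have "t + s - \<xi> \<le> 1 / (2 * eps (t + s))"
      using \<xi>(1) \<open>s \<le> 1\<close> by linarith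
    then have "eps \<xi> \<le> 2 * eps (t + s)"
      using eps_le_twice T'[OF \<open>T' \<le> \<xi>\<close>] \<xi>(2) by simp
    then have "k / 2 * eps \<xi> \<le> k / 2 * (2 * eps (t + s))"
      using \<open>0 < k\<close> by (intro mult_left_mono) auto
    then have "\<bar>eps' \<xi>\<bar> \<le> k * eps (t + s)"
      using T'[OF \<open>T' \<le> \<xi>\<close>] by simp
    then show ?thesis
      using \<xi>(3) \<open>0 < s\<close> mult_left_mono[of "\<bar>eps' \<xi>\<bar>" "k * eps (t + s)" s]
      by (simp add: abs_mult mult.assoc mult.left_commute)
  qed
  then show ?thesis
    unfolding eventually_at_top_linorder by blast
qed

lemma eventually_relaxation_le:
  assumes "T \<le> T'" "0 < \<eta>"
    and shift: "\<And>i. i \<in> I \<Longrightarrow> 0 \<le> \<sigma> i \<and> \<sigma> i \<le> 1"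
    and deriv: "\<And>i t. i \<in> I \<Longrightarrow> T' \<le> t \<Longrightarrow> (\<phi> i has_real_derivative \<phi>' i t) (at t)"
    and relax: "\<And>i t. i \<in> I \<Longrightarrow> T' \<le> t \<Longrightarrow> c < \<phi> i t \<Longrightarrow> \<phi>' i t \<le> - eps (t + \<sigma> i) * (\<phi> i t - c)"
    and init: "\<And>i. i \<in> I \<Longrightarrow> \<phi> i T' \<le> B"
  shows "\<forall>\<^sub>F t in at_top. \<forall>i\<in>I. \<phi> i t \<le> c + \<eta>"
proof -
  obtain C where C: "\<And>t. T \<le> t \<Longrightarrow> 0 < C + t \<and> 1 / (C + t) \<le> eps t"
    using eps_ge_hyperbola by blast
  have "0 < C + 1 + T'" using C[OF \<open>T \<le> T'\<close>] by simp
  have bound: "\<phi> i t \<le> c + max (B - c) 0 * (C + 1 + T') / (C + 1 + t)" if "i \<in> I" "T' \<le> t" for i t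
  proof -
    have "\<phi> i t \<le> c + max (\<phi> i T' - c) 0 * (C + 1 + T') / (C + 1 + t)"
    proof (rule hyperbolic_relaxation_bound[OF deriv[OF \<open>i \<in> I\<close>] _ \<open>0 < C + 1 + T'\<close> \<open>T' \<le> t\<close>])
      fix t assume "T' \<le> t" "c < \<phi> i t"
      then have "T \<le> t + \<sigma> i" using \<open>T \<le> T'\<close> shift[OF \<open>i \<in> I\<close>] by linarith
      then have "0 < C + (t + \<sigma> i)" using C by blast
      then have "1 / (C + 1 + t) \<le> 1 / (C + (t + \<sigma> i))"
        using shift[OF \<open>i \<in> I\<close>] by (intro divide_left_mono) auto
      also have "\<dots> \<le> eps (t + \<sigma> i)" using C[OF \<open>T \<le> t + \<sigma> i\<close>] by simp
      finally have "1 / (C + 1 + t) * (\<phi> i t - c) \<le> eps (t + \<sigma> i) * (\<phi> i t - c)"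
        using \<open>c < \<phi> i t\<close> by (intro mult_right_mono) auto
      with relax[OF \<open>i \<in> I\<close> \<open>T' \<le> t\<close> \<open>c < \<phi> i t\<close>]
      show "\<phi>' i t \<le> - (\<phi> i t - c) / (C + 1 + t)"
        unfolding minus_divide_left[symmetric] by simp
    qed
    also have "\<dots> \<le> c + max (B - c) 0 * (C + 1 + T') / (C + 1 + t)"
      using init[OF \<open>i \<in> I\<close>] \<open>0 < C + 1 + T'\<close> \<open>T' \<le> t\<close>
      by (intro add_left_mono divide_right_mono mult_right_mono) auto
    finally show ?thesis .
  qed
  have "((\<lambda>t. max (B - c) 0 * (C + 1 + T') / (C + 1 + t)) \<longlongrightarrow> 0) at_top"
    by (intro tendsto_divide_0[OF tendsto_const] filterlim_at_top_imp_at_infinity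
        filterlim_tendsto_add_at_top[OF tendsto_const filterlim_ident])
  then have "\<forall>\<^sub>F t in at_top. max (B - c) 0 * (C + 1 + T') / (C + 1 + t) < \<eta>"
    using \<open>0 < \<eta>\<close> by (rule order_tendstoD)
  then show ?thesis
    using eventually_ge_at_top[of T'] by eventually_elim (use bound in fastforce)
qed

end

section \<open>Tikhonov-regularised flows of monotone operators\<close>

locale tikhonov_flow = tikhonov_parameter eps eps' eps'' T
  for eps eps' eps'' :: "real \<Rightarrow> real" and T :: real +
  fixes F :: "'a::{real_inner,complete_space} \<Rightarrow> 'a" and z z' :: "real \<Rightarrow> 'a"
  assumes F_mono: "\<And>u v. 0 \<le> inner (F u - F v) (u - v)"
    and F_cont: "\<And>u. isCont F u"
    and zeros_nonempty: "{u. F u = 0} \<noteq> {}"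
    and z_deriv: "\<And>t. T \<le> t \<Longrightarrow> (z has_vector_derivative z' t) (at t)"
    and z_flow: "\<And>t. T \<le> t \<Longrightarrow> z' t = - (F (z t) + eps t *\<^sub>R z t)"
begin

abbreviation least_norm_zero :: 'a where
  "least_norm_zero \<equiv> proj_set {u. F u = 0} 0"

lemma least_norm_zero: "F least_norm_zero = 0"
  using proj_set_mem[OF closed_monotone_zeros[OF F_mono F_cont] convex_monotone_zeros[OF F_mono F_cont]
      zeros_nonempty, of 0]
  by simp

lemma norm_sq_diff_deriv:
  "T \<le> t \<Longrightarrow> ((\<lambda>t. (norm (z t - q))\<^sup>2) has_real_derivative 2 * inner (z' t) (z t - q)) (at t)"
  using z_deriv by (intro has_real_derivative_norm_sq derivative_eq_intros) auto

lemma inner_deriv_diff_zero_le: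
  assumes "F q = 0" "T \<le> t"
  shows "inner (z' t) (z t - q) \<le> - eps t * ((norm (z t - q))\<^sup>2 + inner q (z t - q))"
proof -
  have "inner (z' t) (z t - q) = - inner (F (z t) - F q) (z t - q) - eps t * inner (z t) (z t - q)"
    unfolding z_flow[OF \<open>T \<le> t\<close>] using \<open>F q = 0\<close> by (simp add: algebra_simps)
  also have "\<dots> \<le> - eps t * inner (z t) (z t - q)"
    using F_mono[of "z t" q] by simp
  also have "inner (z t) (z t - q) = (norm (z t - q))\<^sup>2 + inner q (z t - q)"
    by (simp add: power2_norm_eq_inner inner_add inner_diff inner_commute)
  finally show ?thesis .
qed

lemma trajectory_bounded: "\<exists>R>0. \<forall>t\<ge>T. norm (z t) \<le> R"
proof -
  obtain q where "F q = 0" using zeros_nonempty by blast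
  define h where "h t = (norm (z t - q))\<^sup>2 - (norm q)\<^sup>2" for t
  have h_le: "h t \<le> max (h T) 0" if "T \<le> t" for t
  proof (rule le_max_if_deriv_nonpos_where_pos[OF _ _ that])
    fix t assume "T \<le> t"
    show "(h has_real_derivative 2 * inner (z' t) (z t - q)) (at t)"
      unfolding h_def using DERIV_diff[OF norm_sq_diff_deriv[OF \<open>T \<le> t\<close>] DERIV_const] by simp
    assume "0 < h t"
    then have "norm q \<le> norm (z t - q)"
      unfolding h_def by (simp add: power_less_imp_less_base less_imp_le)
    then have "norm q * norm (z t - q) \<le> (norm (z t - q))\<^sup>2"
      by (simp add: power2_eq_square mult_right_mono)
    moreover have "- (norm q * norm (z t - q)) \<le> inner q (z t - q)"
      using Cauchy_Schwarz_ineq2[of q "z t - q"] by linarith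
    ultimately have "0 \<le> eps t * ((norm (z t - q))\<^sup>2 + inner q (z t - q))"
      using eps_pos[OF \<open>T \<le> t\<close>] by simp
    then show "2 * inner (z' t) (z t - q) \<le> 0"
      using inner_deriv_diff_zero_le[OF \<open>F q = 0\<close> \<open>T \<le> t\<close>] by linarith
  qed
  have "norm (z t - q) \<le> sqrt ((norm q)\<^sup>2 + max (h T) 0)" if "T \<le> t" for t
    using h_le[OF that] unfolding h_def by (intro real_le_rsqrt) linarith
  then have "norm (z t) \<le> norm q + sqrt ((norm q)\<^sup>2 + max (h T) 0) + 1" if "T \<le> t" for t
    using that norm_triangle_sub[of "z t" q] by fastforce
  moreover have "0 < norm q + sqrt ((norm q)\<^sup>2 + max (h T) 0) + 1"
    by (simp add: add_nonneg_pos)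
  ultimately show ?thesis by blast
qed

lemma z'_continuous_on: "continuous_on {T..} z'"
proof -
  have z: "continuous_on {T..} z"
    by (intro continuous_at_imp_continuous_on ballI has_vector_derivative_continuous[OF z_deriv]) simp
  have eps: "continuous_on {T..} eps"
    by (intro continuous_at_imp_continuous_on ballI DERIV_isCont[OF eps_deriv]) simp
  have "continuous_on UNIV F"
    by (intro continuous_at_imp_continuous_on ballI F_cont)
  then have "continuous_on {T..} (\<lambda>t. F (z t))"
    using continuous_on_compose2[OF _ z subset_UNIV] by blast
  then have "continuous_on {T..} (\<lambda>t. - (F (z t) + eps t *\<^sub>R z t))"
    using continuous_on_minus continuous_on_add continuous_on_scaleR[OF eps z] by blast
  then show ?thesis
    by (rule continuous_on_eq) (simp add: z_flow)
qed

lemma increment_inner_le: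
  assumes "T \<le> t" "0 < s" "norm (z t) \<le> R"
    and "\<bar>eps (t + s) - eps t\<bar> \<le> k * s * eps (t + s)"
  shows "inner (z' (t + s) - z' t) (z (t + s) - z t)
    \<le> - eps (t + s) / 2 * ((norm (z (t + s) - z t))\<^sup>2 - (k * s * R)\<^sup>2)"
proof -
  define D where "D = z (t + s) - z t"
  define a where "a = eps (t + s)"
  define \<Delta> where "\<Delta> = eps (t + s) - eps t"
  have "T \<le> t + s" using assms by simp
  then have "0 < a" unfolding a_def using eps_pos by simp
  have "z' (t + s) - z' t = - (F (z (t + s)) - F (z t)) - a *\<^sub>R D - \<Delta> *\<^sub>R z t"
    unfolding z_flow[OF \<open>T \<le> t\<close>] z_flow[OF \<open>T \<le> t + s\<close>] D_def a_def \<Delta>_def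
    by (simp add: algebra_simps)
  then have "inner (z' (t + s) - z' t) D
      = - inner (F (z (t + s)) - F (z t)) D - a * (norm D)\<^sup>2 - \<Delta> * inner (z t) D"
    by (simp add: inner_diff_left power2_norm_eq_inner)
  also have "\<dots> \<le> - a * (norm D)\<^sup>2 + \<bar>\<Delta>\<bar> * (norm (z t) * norm D)"
  proof -
    have "- (\<Delta> * inner (z t) D) \<le> \<bar>\<Delta>\<bar> * \<bar>inner (z t) D\<bar>"
      by (simp flip: abs_mult)
    also have "\<dots> \<le> \<bar>\<Delta>\<bar> * (norm (z t) * norm D)"
      by (intro mult_left_mono Cauchy_Schwarz_ineq2) auto
    finally show ?thesis
      using F_mono[of "z (t + s)" "z t"] unfolding D_def by linarith
  qed
  also have "\<dots> \<le> - a * (norm D)\<^sup>2 + (k * s * a) * (R * norm D)"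
  proof -
    have "\<bar>\<Delta>\<bar> \<le> k * s * a" using assms(4) by (simp add: a_def \<Delta>_def)
    moreover have "norm (z t) * norm D \<le> R * norm D" using assms(3) by (simp add: mult_right_mono)
    moreover have "0 \<le> k * s * a" using calculation(1) abs_ge_zero[of \<Delta>] by linarith
    ultimately have "\<bar>\<Delta>\<bar> * (norm (z t) * norm D) \<le> (k * s * a) * (R * norm D)"
      by (rule mult_mono) simp
    then show ?thesis by simp
  qed
  also have "\<dots> = - a * (norm D)\<^sup>2 + a / 2 * (2 * norm D * (k * s * R))"
    by (simp add: field_simps)
  also have "\<dots> \<le> - a * (norm D)\<^sup>2 + a / 2 * ((norm D)\<^sup>2 + (k * s * R)\<^sup>2)"
    using \<open>0 < a\<close> sum_squares_bound[of "norm D" "k * s * R"] by (intro add_left_mono mult_left_mono) auto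
  also have "\<dots> = - a / 2 * ((norm D)\<^sup>2 - (k * s * R)\<^sup>2)"
    by (simp add: field_simps)
  finally show ?thesis unfolding D_def a_def .
qed

lemma increment_norm_sq_deriv:
  assumes "T \<le> t" "0 \<le> s"
  shows "((\<lambda>t. (norm (z (t + s) - z t))\<^sup>2) has_real_derivative
    2 * inner (z' (t + s) - z' t) (z (t + s) - z t)) (at t)"
proof -
  have "((\<lambda>t. z (t + s) - z t) has_vector_derivative z' (t + s) - z' t) (at t)"
    using assms by (intro has_vector_derivative_diff has_vector_derivative_shift z_deriv) simp_all
  then show ?thesis by (rule has_real_derivative_norm_sq)
qed

lemma increment_quotients_bounded:
  assumes "T \<le> T'"
  obtains B where "\<And>s. 0 < s \<Longrightarrow> s \<le> 1 \<Longrightarrow> (norm (z (T' + s) - z T'))\<^sup>2 / s\<^sup>2 \<le> B"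
proof -
  have "\<And>t. t \<in> {T'..T' + 1} \<Longrightarrow> (z has_vector_derivative z' t) (at t)"
    using \<open>T \<le> T'\<close> z_deriv by simp
  moreover have "continuous_on {T'..T' + 1} z'"
    using z'_continuous_on by (rule continuous_on_subset) (use \<open>T \<le> T'\<close> in auto)
  ultimately obtain L where L: "L-lipschitz_on {T'..T' + 1} z"
    by (rule lipschitz_on_if_continuous_derivative)
  have "(norm (z (T' + s) - z T'))\<^sup>2 / s\<^sup>2 \<le> L\<^sup>2" if "0 < s" "s \<le> 1" for s
  proof -
    have "norm (z (T' + s) - z T') \<le> L * s"
      using lipschitz_on_normD[OF L, of "T' + s" T'] that by simp
    then have "(norm (z (T' + s) - z T'))\<^sup>2 \<le> (L * s)\<^sup>2" by (simp add: power_mono)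
    then show ?thesis using \<open>0 < s\<close> by (simp add: field_simps)
  qed
  then show thesis by (rule that)
qed

lemma eventually_increment_quotients_le:
  assumes "0 < \<eta>"
  shows "\<forall>\<^sub>F t in at_top. \<forall>s\<in>{0<..1}. (norm (z (t + s) - z t))\<^sup>2 / s\<^sup>2 \<le> \<eta>"
proof -
  obtain R where "0 < R" and R: "\<And>t. T \<le> t \<Longrightarrow> norm (z t) \<le> R"
    using trajectory_bounded by blast
  define k where "k = sqrt (\<eta> / 2) / R"
  have "0 < k" "(k * R)\<^sup>2 = \<eta> / 2" using \<open>0 < \<eta>\<close> \<open>0 < R\<close> by (simp_all add: k_def)
  have "\<forall>\<^sub>F t in at_top. T \<le> t \<and>
      (\<forall>s. 0 < s \<longrightarrow> s \<le> 1 \<longrightarrow> \<bar>eps (t + s) - eps t\<bar> \<le> k * s * eps (t + s))"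
    using eventually_ge_at_top eventually_eps_increment_le[OF \<open>0 < k\<close>] by (rule eventually_conj)
  then obtain T' where T': "\<And>t. T' \<le> t \<Longrightarrow> T \<le> t \<and>
      (\<forall>s. 0 < s \<longrightarrow> s \<le> 1 \<longrightarrow> \<bar>eps (t + s) - eps t\<bar> \<le> k * s * eps (t + s))"
    unfolding eventually_at_top_linorder by blast
  then have "T \<le> T'" by simp
  obtain B where B: "\<And>s. 0 < s \<Longrightarrow> s \<le> 1 \<Longrightarrow> (norm (z (T' + s) - z T'))\<^sup>2 / s\<^sup>2 \<le> B"
    using increment_quotients_bounded[OF \<open>T \<le> T'\<close>] by blast
  have "\<forall>\<^sub>F t in at_top. \<forall>s\<in>{0<..1}. (norm (z (t + s) - z t))\<^sup>2 / s\<^sup>2 \<le> (k * R)\<^sup>2 + \<eta> / 2"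
  proof (rule eventually_relaxation_le[OF \<open>T \<le> T'\<close>, where \<sigma> = "\<lambda>s. s" and B = B])
    fix s t :: real assume s: "s \<in> {0<..1}" and "T' \<le> t"
    then have "T \<le> t" "0 < s" "s \<le> 1" using \<open>T \<le> T'\<close> by auto
    then show "((\<lambda>t. (norm (z (t + s) - z t))\<^sup>2 / s\<^sup>2) has_real_derivative
        2 * inner (z' (t + s) - z' t) (z (t + s) - z t) / s\<^sup>2) (at t)"
      by (intro DERIV_cdivide increment_norm_sq_deriv) simp_all
    have "inner (z' (t + s) - z' t) (z (t + s) - z t)
        \<le> - eps (t + s) / 2 * ((norm (z (t + s) - z t))\<^sup>2 - (k * s * R)\<^sup>2)"
      using T'[OF \<open>T' \<le> t\<close>] \<open>0 < s\<close> \<open>s \<le> 1\<close>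
      by (intro increment_inner_le[OF \<open>T \<le> t\<close> \<open>0 < s\<close> R[OF \<open>T \<le> t\<close>]]) simp
    then show "2 * inner (z' (t + s) - z' t) (z (t + s) - z t) / s\<^sup>2
        \<le> - eps (t + s) * ((norm (z (t + s) - z t))\<^sup>2 / s\<^sup>2 - (k * R)\<^sup>2)"
      using \<open>0 < s\<close> by (simp add: field_simps)
  qed (use \<open>0 < \<eta>\<close> B in simp_all)
  then show ?thesis using \<open>(k * R)\<^sup>2 = \<eta> / 2\<close> by simp
qed

lemma deriv_tendsto_zero: "(z' \<longlongrightarrow> 0) at_top"
proof (rule tendstoI)
  fix e :: real assume "0 < e"
  then have "\<forall>\<^sub>F t in at_top. \<forall>s\<in>{0<..1}. (norm (z (t + s) - z t))\<^sup>2 / s\<^sup>2 \<le> (e / 2)\<^sup>2"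
    by (intro eventually_increment_quotients_le) simp
  then show "\<forall>\<^sub>F t in at_top. dist (z' t) 0 < e"
    using eventually_ge_at_top[of T]
  proof eventually_elim
    case (elim t)
    have "norm (z (t + s) - z t) \<le> s * (e / 2)" if "0 < s" "s \<le> 1" for s
    proof (rule power2_le_imp_le)
      have "(norm (z (t + s) - z t))\<^sup>2 / s\<^sup>2 \<le> (e / 2)\<^sup>2" using elim(1) that by simp
      then show "(norm (z (t + s) - z t))\<^sup>2 \<le> (s * (e / 2))\<^sup>2"
        using \<open>0 < s\<close> by (simp add: field_simps)
    qed (use that \<open>0 < e\<close> in simp)
    then have "norm (z' t) \<le> e / 2"
      by (rule norm_deriv_le_if_increments_le[OF z_deriv[OF elim(2)]])
    then show ?case using \<open>0 < e\<close> by simp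
  qed
qed

lemma F_tendsto_zero: "((\<lambda>t. F (z t)) \<longlongrightarrow> 0) at_top"
proof -
  obtain R where R: "\<And>t. T \<le> t \<Longrightarrow> norm (z t) \<le> R"
    using trajectory_bounded by blast
  have "((\<lambda>t. eps t * R) \<longlongrightarrow> 0) at_top"
    using tendsto_mult_left_zero[OF eps_tendsto] .
  moreover have "\<forall>\<^sub>F t in at_top. norm (eps t *\<^sub>R z t) \<le> eps t * R"
    using eventually_ge_at_top[of T]
  proof eventually_elim
    case (elim t)
    then show ?case
      using mult_left_mono[OF R[OF elim], of "eps t"] eps_pos[OF elim] by simp
  qed
  ultimately have eps_z: "((\<lambda>t. eps t *\<^sub>R z t) \<longlongrightarrow> 0) at_top"
    by (rule Lim_null_comparison[rotated])
  have "((\<lambda>t. - z' t - eps t *\<^sub>R z t) \<longlongrightarrow> 0) at_top"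
    using tendsto_diff[OF tendsto_minus[OF deriv_tendsto_zero] eps_z] by simp
  moreover have "\<forall>\<^sub>F t in at_top. - z' t - eps t *\<^sub>R z t = F (z t)"
    using eventually_ge_at_top[of T] by eventually_elim (simp add: z_flow)
  ultimately show ?thesis by (rule Lim_transform_eventually)
qed

lemma eventually_inner_least_norm_zero_ge:
  assumes "0 < \<eta>"
  shows "\<forall>\<^sub>F t in at_top. - \<eta> \<le> inner least_norm_zero (z t - least_norm_zero)"
proof -
  let ?p = least_norm_zero
  obtain R where "0 < R" and R: "\<And>t. T \<le> t \<Longrightarrow> norm (z t) \<le> R"
    using trajectory_bounded by blast
  define K where "K n = minty_relaxation F R (inverse (Suc n))" for n
  have "(\<lambda>n. proj_set (K n) 0) \<longlonglongrightarrow> ?p"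
    using proj_set_minty_relaxation_tendsto[OF F_mono F_cont _ zeros_nonempty, of R 0] \<open>0 < R\<close>
    unfolding K_def by simp
  then have "(\<lambda>n. norm (proj_set (K n) 0 - ?p) * (R + 2 * norm ?p)) \<longlonglongrightarrow> 0"
    by (rule tendsto_mult_left_zero[OF tendsto_norm_zero[OF LIM_zero]])
  then have "\<forall>\<^sub>F n in sequentially. norm (proj_set (K n) 0 - ?p) * (R + 2 * norm ?p) < \<eta>"
    using \<open>0 < \<eta>\<close> by (rule order_tendstoD(2))
  then obtain n where n: "norm (proj_set (K n) 0 - ?p) * (R + 2 * norm ?p) < \<eta>"
    unfolding eventually_sequentially by (meson order_refl)
  define q where "q = proj_set (K n) 0"
  have "?p \<in> (\<Inter>n. K n)"
    unfolding K_def Inter_minty_relaxation[OF F_mono F_cont less_imp_le[OF \<open>0 < R\<close>]]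
    using least_norm_zero by simp
  then have "?p \<in> K n" by blast
  then have "K n \<noteq> {}" by blast
  note closed = closed_minty_relaxation[of F R "inverse (Suc n)", folded K_def]
  note convex = convex_minty_relaxation[of F R "inverse (Suc n)", folded K_def]
  have q_le: "dist 0 q \<le> dist 0 w" if "w \<in> K n" for w
    unfolding q_def using proj_set_dist_le[OF closed convex \<open>K n \<noteq> {}\<close> that] .
  then have "norm q \<le> norm ?p" using \<open>?p \<in> K n\<close> by simp
  have "\<forall>\<^sub>F t in at_top. norm (F (z t)) < inverse (Suc n)"
    using order_tendstoD(2)[OF tendsto_norm_zero[OF F_tendsto_zero], of "inverse (Suc n)"] by simp
  then show ?thesis
    using eventually_ge_at_top[of T]
  proof eventually_elim
    case (elim t)
    then have "z t \<in> K n"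
      unfolding K_def by (intro mem_minty_relaxation[OF F_mono R[OF elim(2)]]) simp
    then have "inner (0 - q) (z t - q) \<le> 0"
      using any_closest_point_dot[OF convex closed, of q] q_le
        proj_set_mem[OF closed convex \<open>K n \<noteq> {}\<close>] unfolding q_def by blast
    moreover have "inner q (z t - q) - inner ?p (z t - ?p)
        \<le> norm (?p - q) * (norm (z t) + norm ?p + norm q)"
      using inner_diff_self_diff_le[of ?p "z t" q] by linarith
    moreover have "norm (?p - q) * (norm (z t) + norm ?p + norm q) \<le> norm (?p - q) * (R + 2 * norm ?p)"
      using R[OF elim(2)] \<open>norm q \<le> norm ?p\<close> by (intro mult_left_mono) simp_all
    ultimately show ?case using n unfolding q_def by (simp add: norm_minus_commute)
  qed
qed

theorem tendsto_least_norm_zero: "(z \<longlongrightarrow> least_norm_zero) at_top"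
proof (rule tendstoI)
  fix e :: real assume "0 < e"
  let ?p = least_norm_zero
  define h where "h t = (norm (z t - ?p))\<^sup>2" for t
  have "\<forall>\<^sub>F t in at_top. T \<le> t \<and> - (e\<^sup>2 / 4) \<le> inner ?p (z t - ?p)"
    using \<open>0 < e\<close> by (intro eventually_conj eventually_ge_at_top eventually_inner_least_norm_zero_ge) simp
  then obtain T' where T': "\<And>t. T' \<le> t \<Longrightarrow> T \<le> t \<and> - (e\<^sup>2 / 4) \<le> inner ?p (z t - ?p)"
    unfolding eventually_at_top_linorder by blast
  then have "T \<le> T'" by simp
  have "\<forall>\<^sub>F t in at_top. \<forall>i\<in>{()}. h t \<le> e\<^sup>2 / 4 + e\<^sup>2 / 2"
  proof (rule eventually_relaxation_le[OF \<open>T \<le> T'\<close>, where \<sigma> = "\<lambda>_. 0" and \<phi> = "\<lambda>_. h" and B = "h T'"])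
    fix t assume "T' \<le> t"
    then have "T \<le> t" using T' by simp
    then show "(h has_real_derivative 2 * inner (z' t) (z t - ?p)) (at t)"
      unfolding h_def by (rule norm_sq_diff_deriv)
    assume "e\<^sup>2 / 4 < h t"
    have "eps t * (h t - e\<^sup>2 / 4) \<le> eps t * (h t + inner ?p (z t - ?p))"
      using T'[OF \<open>T' \<le> t\<close>] eps_pos[OF \<open>T \<le> t\<close>] by (intro mult_left_mono) simp_all
    moreover have "0 \<le> eps t * (h t - e\<^sup>2 / 4)"
      using eps_pos[OF \<open>T \<le> t\<close>] \<open>e\<^sup>2 / 4 < h t\<close> by simp
    moreover have "inner (z' t) (z t - ?p) \<le> - (eps t * (h t + inner ?p (z t - ?p)))"
      unfolding h_def using inner_deriv_diff_zero_le[OF least_norm_zero \<open>T \<le> t\<close>] by simp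
    ultimately show "2 * inner (z' t) (z t - ?p) \<le> - eps (t + 0) * (h t - e\<^sup>2 / 4)"
      by simp
  next
    show "0 < e\<^sup>2 / 2" using \<open>0 < e\<close> by simp
  qed simp_all
  then show "\<forall>\<^sub>F t in at_top. dist (z t) ?p < e"
  proof (rule eventually_mono)
    fix t assume "\<forall>i\<in>{()}. h t \<le> e\<^sup>2 / 4 + e\<^sup>2 / 2"
    then have "(dist (z t) ?p)\<^sup>2 \<le> 3 / 4 * e\<^sup>2" by (simp add: h_def dist_norm)
    moreover have "0 < e\<^sup>2" using \<open>0 < e\<close> by simp
    ultimately have "(dist (z t) ?p)\<^sup>2 < e\<^sup>2" by linarith
    then show "dist (z t) ?p < e" by (rule power_less_imp_less_base) (use \<open>0 < e\<close> in simp)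
  qed
qed

end

section \<open>The saddle operator of the Lagrangian\<close>

lemma convex_gradient_inequality:
  fixes f :: "'a::real_inner \<Rightarrow> real"
  assumes convex: "convex_on UNIV f"
    and grad: "\<And>z. (f has_derivative (\<lambda>h. inner (gradf z) h)) (at z)"
  shows "f u + inner (gradf u) (w - u) \<le> f w"
proof -
  define \<phi> where "\<phi> s = f (u + s *\<^sub>R (w - u))" for s :: real
  have "convex_on UNIV \<phi>"
  proof (rule convex_onI)
    fix t a b :: real assume "0 < t" "t < 1"
    have "u + ((1 - t) *\<^sub>R a + t *\<^sub>R b) *\<^sub>R (w - u)
        = (1 - t) *\<^sub>R (u + a *\<^sub>R (w - u)) + t *\<^sub>R (u + b *\<^sub>R (w - u))"
      by (simp add: algebra_simps)
    then show "\<phi> ((1 - t) *\<^sub>R a + t *\<^sub>R b) \<le> (1 - t) * \<phi> a + t * \<phi> b"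
      unfolding \<phi>_def using convex_onD[OF convex, of t] \<open>0 < t\<close> \<open>t < 1\<close> by simp
  qed simp
  moreover have "(\<phi> has_field_derivative inner (gradf u) (w - u)) (at 0)"
  proof -
    have "((\<lambda>s. u + s *\<^sub>R (w - u)) has_derivative (\<lambda>h. h *\<^sub>R (w - u))) (at 0)"
      by (auto intro!: derivative_eq_intros)
    from has_derivative_compose[OF this grad[of "u + 0 *\<^sub>R (w - u)"]]
    show ?thesis
      unfolding \<phi>_def has_field_derivative_def
      by (rule has_derivative_eq_rhs) (simp add: fun_eq_iff mult.commute)
  qed
  ultimately have "inner (gradf u) (w - u) * (1 - 0) \<le> \<phi> 1 - \<phi> 0"
    by (intro convex_on_imp_above_tangent) auto
  then show ?thesis unfolding \<phi>_def by simp
qed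

lemma convex_gradient_monotone:
  fixes f :: "'a::real_inner \<Rightarrow> real"
  assumes "convex_on UNIV f" "\<And>z. (f has_derivative (\<lambda>h. inner (gradf z) h)) (at z)"
  shows "0 \<le> inner (gradf u - gradf v) (u - v)"
  using convex_gradient_inequality[OF assms, of u v] convex_gradient_inequality[OF assms, of v u]
  by (simp add: inner_diff_left inner_diff_right)

lemma bounded_linear_adjoint:
  fixes A :: "'a::real_inner \<Rightarrow> 'b::real_inner"
  assumes "bounded_linear A" and adj: "\<And>u v. inner (A u) v = inner u (Aadj v)"
  shows "bounded_linear Aadj"
proof -
  interpret A: bounded_linear A by fact
  obtain K where K: "\<And>u. norm (A u) \<le> norm u * K" and "0 < K"
    using A.pos_bounded by blast
  show ?thesis
  proof
    show "Aadj (a + c) = Aadj a + Aadj c" for a c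
      using vector_eq_ldot by (metis adj inner_add_right)
    show "Aadj (r *\<^sub>R a) = r *\<^sub>R Aadj a" for r a
      using vector_eq_ldot by (metis adj inner_scaleR_right)
    show "\<exists>K. \<forall>v. norm (Aadj v) \<le> norm v * K"
    proof (intro exI allI)
      fix v
      have "(norm (Aadj v))\<^sup>2 = inner (A (Aadj v)) v"
        by (simp add: adj power2_norm_eq_inner)
      also have "\<dots> \<le> norm (A (Aadj v)) * norm v"
        by (rule Cauchy_Schwarz_ineq2[THEN abs_le_D1])
      also have "\<dots> \<le> norm (Aadj v) * K * norm v"
        using K[of "Aadj v"] by (rule mult_right_mono) simp
      finally show "norm (Aadj v) \<le> norm v * K"
        using \<open>0 < K\<close>
        by (cases "Aadj v = 0") (auto simp: power2_eq_square mult.commute mult.left_commute)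
    qed
  qed
qed

text \<open>The operator \<open>(\<nabla>\<^sub>x L, - \<nabla>\<^sub>\<lambda> L)\<close> of the Lagrangian \<open>L x \<lambda> = f x + \<langle>\<lambda>, A x - b\<rangle>\<close>:
  (AHT) is the Tikhonov-regularised flow \<open>z' + F z + eps z = 0\<close> of this operator.\<close>

definition saddle_operator ::
  "('x::real_inner \<Rightarrow> 'x) \<Rightarrow> ('x \<Rightarrow> 'y::real_inner) \<Rightarrow> ('y \<Rightarrow> 'x) \<Rightarrow> 'y \<Rightarrow> 'x \<times> 'y \<Rightarrow> 'x \<times> 'y" where
  "saddle_operator gradf A Aadj b w = (gradf (fst w) + Aadj (snd w), b - A (fst w))"

lemma saddle_operator_monotone:
  assumes grad_mono: "\<And>u v. 0 \<le> inner (gradf u - gradf v) (u - v)"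
    and adj: "\<And>u v. inner (A u) v = inner u (Aadj v)"
  shows "0 \<le> inner (saddle_operator gradf A Aadj b w - saddle_operator gradf A Aadj b w') (w - w')"
proof -
  obtain u l u' l' where w: "w = (u, l)" "w' = (u', l')" by fastforce
  have "inner (Aadj l - Aadj l') (u - u') = inner (A u - A u') (l - l')"
    using adj[of u l] adj[of u' l] adj[of u l'] adj[of u' l'] by (simp add: inner_diff inner_commute)
  then have "inner (saddle_operator gradf A Aadj b w - saddle_operator gradf A Aadj b w') (w - w')
      = inner (gradf u - gradf u') (u - u')"
    unfolding w saddle_operator_def by (simp add: algebra_simps)
  then show ?thesis using grad_mono by simp
qed

lemma saddle_operator_isCont:
  assumes "continuous_on UNIV gradf" "bounded_linear A" "bounded_linear Aadj"
  shows "isCont (saddle_operator gradf A Aadj b) w"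
proof -
  have "continuous_on UNIV (saddle_operator gradf A Aadj b)"
    unfolding saddle_operator_def
    by (intro continuous_intros continuous_on_compose2[OF assms(1)]
        linear_continuous_on[OF assms(2)] linear_continuous_on[OF assms(3)]
        continuous_on_compose2[OF linear_continuous_on[OF assms(2)]]
        continuous_on_compose2[OF linear_continuous_on[OF assms(3)]]) auto
  then show ?thesis using continuous_on_eq_continuous_at[OF open_UNIV] by blast
qed

lemma gradient_add_multiplier_eq_zero:
  fixes f :: "'x::real_inner \<Rightarrow> real" and A :: "'x \<Rightarrow> 'y::real_inner"
  assumes convex: "convex_on UNIV f" and grad: "\<And>z. (f has_derivative (\<lambda>h. inner (gradf z) h)) (at z)"
    and adj: "\<And>u v. inner (A u) v = inner u (Aadj v)"
    and u: "u \<in> opt_solutions f A b"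
    and l: "l \<in> lagrange_multipliers gradf Aadj (opt_solutions f A b)"
  shows "gradf u + Aadj l = 0"
proof -
  have adj': "inner (Aadj v) x = inner v (A x)" for v x
    using adj[of x v] by (simp add: inner_commute)
  obtain y where y: "y \<in> opt_solutions f A b" "gradf y + Aadj l = 0"
    using l unfolding lagrange_multipliers_def by blast
  define g where "g v = f v + inner (Aadj l) v" for v
  have "g y \<le> g v" for v
    using convex_gradient_inequality[OF convex grad, of y v] y(2)
    by (simp add: g_def eq_neg_iff_add_eq_0[symmetric] inner_diff_right)
  moreover have "f u = f y"
    using u y(1) unfolding opt_solutions_def by (auto intro: antisym)
  moreover have "inner (Aadj l) u = inner (Aadj l) y"
    using u y(1) by (simp add: adj' opt_solutions_def)
  ultimately have "g y \<le> g v" "g u = g y" for v by (simp_all add: g_def)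
  then have "\<forall>\<^sub>F v in at u. g u \<le> g v" by simp
  moreover have "(g has_derivative (\<lambda>h. inner (gradf u + Aadj l) h)) (at u)"
    unfolding g_def inner_add_left
    by (intro has_derivative_add grad has_derivative_inner_right has_derivative_ident)
  ultimately have "(\<lambda>h. inner (gradf u + Aadj l) h) = (\<lambda>h. 0)"
    by (intro has_derivative_local_min) auto
  then show ?thesis by (metis inner_eq_zero_iff)
qed

lemma saddle_points_eq_zeros:
  fixes f :: "'x::real_inner \<Rightarrow> real" and A :: "'x \<Rightarrow> 'y::real_inner"
  assumes convex: "convex_on UNIV f" and grad: "\<And>z. (f has_derivative (\<lambda>h. inner (gradf z) h)) (at z)"
    and adj: "\<And>u v. inner (A u) v = inner u (Aadj v)"
  shows "opt_solutions f A b \<times> lagrange_multipliers gradf Aadj (opt_solutions f A b)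
    = {w. saddle_operator gradf A Aadj b w = 0}"
proof (intro set_eqI iffI)
  fix w assume "w \<in> opt_solutions f A b \<times> lagrange_multipliers gradf Aadj (opt_solutions f A b)"
  then show "w \<in> {w. saddle_operator gradf A Aadj b w = 0}"
    using gradient_add_multiplier_eq_zero[OF convex grad adj, of "fst w" b "snd w"]
    by (auto simp: saddle_operator_def opt_solutions_def zero_prod_def)
next
  fix w assume "w \<in> {w. saddle_operator gradf A Aadj b w = 0}"
  have adj': "inner (Aadj v) x = inner v (A x)" for v x
    using adj[of x v] by (simp add: inner_commute)
  from \<open>w \<in> _\<close> have zero: "gradf (fst w) + Aadj (snd w) = 0" and "A (fst w) = b"
    by (simp_all add: saddle_operator_def zero_prod_def)
  have "f (fst w) \<le> f v" if "A v = b" for v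
    using convex_gradient_inequality[OF convex grad, of "fst w" v] zero \<open>A (fst w) = b\<close> that
    by (simp add: eq_neg_iff_add_eq_0[symmetric] inner_diff_right adj')
  then have "fst w \<in> opt_solutions f A b"
    using \<open>A (fst w) = b\<close> by (simp add: opt_solutions_def)
  with zero show "w \<in> opt_solutions f A b \<times> lagrange_multipliers gradf Aadj (opt_solutions f A b)"
    by (auto simp: lagrange_multipliers_def mem_Times_iff)
qed

theorem proposition3p8:
  fixes f :: "'x::{real_inner,complete_space} \<Rightarrow> real"
    and gradf :: "'x \<Rightarrow> 'x"
    and A :: "'x \<Rightarrow> 'y::{real_inner,complete_space}"
    and Aadj :: "'y \<Rightarrow> 'x"
    and b :: 'y
    and eps eps' eps'' :: "real \<Rightarrow> real"
    and t0 tp :: real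
    and x x' :: "real \<Rightarrow> 'x"
    and l l' :: "real \<Rightarrow> 'y"
  assumes f_convex: "convex_on UNIV f"
    and f_grad: "\<And>z. (f has_derivative (\<lambda>h. inner (gradf z) h)) (at z)"
    and grad_cont: "continuous_on UNIV gradf"
    and grad_lip: "\<And>B. bounded B \<Longrightarrow>
        \<exists>L. \<forall>u\<in>B. \<forall>v\<in>B. norm (gradf u - gradf v) \<le> L * norm (u - v)"
    and A_lin: "bounded_linear A"
    and A_adj: "\<And>u v. inner (A u) v = inner u (Aadj v)"
    and t0_nonneg: "t0 \<ge> 0"
    and eps_pos: "\<And>t. t \<ge> t0 \<Longrightarrow> eps t > 0"
    and eps_lim: "(eps \<longlongrightarrow> 0) at_top"
    and eps_d1: "\<And>t. t \<ge> t0 \<Longrightarrow> (eps has_real_derivative eps' t) (at t within {t0..})"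
    and eps_d2: "\<And>t. t \<ge> t0 \<Longrightarrow> (eps' has_real_derivative eps'' t) (at t within {t0..})"
    and eps''_cont: "continuous_on {t0..} eps''"
    and SM_nonempty: "opt_solutions f A b \<times> lagrange_multipliers gradf Aadj (opt_solutions f A b) \<noteq> {}"
    and x_deriv: "\<And>t. t \<ge> t0 \<Longrightarrow> (x has_vector_derivative x' t) (at t within {t0..})"
    and l_deriv: "\<And>t. t \<ge> t0 \<Longrightarrow> (l has_vector_derivative l' t) (at t within {t0..})"
    and x'_cont: "continuous_on {t0..} x'"
    and l'_cont: "continuous_on {t0..} l'"
    and eq_x: "\<And>t. t \<ge> t0 \<Longrightarrow> x' t + gradf (x t) + Aadj (l t) + eps t *\<^sub>R x t = 0"
    and eq_l: "\<And>t. t \<ge> t0 \<Longrightarrow> l' t + b - A (x t) + eps t *\<^sub>R l t = 0"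
    and tp_ge: "tp \<ge> t0"
    and cond1: "\<And>t. t \<ge> tp \<Longrightarrow> (eps t)\<^sup>2 + eps' t \<ge> 0"
    and cond2: "\<And>t. t \<ge> tp \<Longrightarrow> 2 * eps t * eps' t + eps'' t \<le> 0"
  shows "((\<lambda>t. (x t, l t)) \<longlongrightarrow>
           proj_set (opt_solutions f A b \<times> lagrange_multipliers gradf Aadj (opt_solutions f A b)) (0, 0))
         at_top"
proof -
  let ?F = "saddle_operator gradf A Aadj b"
  have SM: "opt_solutions f A b \<times> lagrange_multipliers gradf Aadj (opt_solutions f A b) = {w. ?F w = 0}"
    using f_convex f_grad A_adj by (rule saddle_points_eq_zeros)
  have at_t: "at t within {t0..} = at t" if "tp + 1 \<le> t" for t
    using that tp_ge by (intro at_within_interior) auto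
  have eps_derivs: "(eps has_real_derivative eps' t) (at t)" "(eps' has_real_derivative eps'' t) (at t)"
    if "tp + 1 \<le> t" for t
    using eps_d1[of t] eps_d2[of t] at_t[OF that] that tp_ge by simp_all
  interpret tikhonov_flow eps eps' eps'' "tp + 1" ?F "\<lambda>t. (x t, l t)" "\<lambda>t. (x' t, l' t)"
  proof
    show "0 \<le> inner (?F u - ?F v) (u - v)" for u v
      using convex_gradient_monotone[OF f_convex f_grad] A_adj
      by (rule saddle_operator_monotone)
    show "isCont ?F u" for u
      using grad_cont A_lin bounded_linear_adjoint[OF A_lin A_adj] by (rule saddle_operator_isCont)
    show "{u. ?F u = 0} \<noteq> {}" using SM_nonempty SM by simp
    show "((\<lambda>t. (x t, l t)) has_vector_derivative (x' t, l' t)) (at t)" if "tp + 1 \<le> t" for t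
      using has_vector_derivative_Pair[OF x_deriv[of t] l_deriv[of t]] at_t[OF that] that tp_ge by simp
  qed (use eps_derivs tp_ge eps_pos eps_lim cond1 cond2 eq_x eq_l in
      \<open>auto simp: saddle_operator_def eq_neg_iff_add_eq_0 algebra_simps\<close>)
  show ?thesis
    using tendsto_least_norm_zero unfolding SM by (simp add: zero_prod_def)
qed

end
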